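(* Let \((Q, \preccurlyeq_Q)\) and \((L, \preccurlyeq_L)\) be posets with smallest elements \(q_0 \in Q\) and \(l_0 \in L\). Then the following conditions are equivalent for every mapping \(f \colon Q \to L\). (i) For every nonempty set \(X\), \(f \circ d\) is an \(L\)-ultrametric whenever \(d\colon X^2\to Q\) is a \(Q\)-ultrametric. (ii) \(f\) is isotone and, for every \(q \in Q\), \(f(q) = l_0\) holds if and only if \(q = q_0\).
   Context: For a poset \((P,\preccurlyeq_P)\) with smallest element \(p_0\) and a nonempty set \(X\), \(d\colon X^2\to P\) is a \(P\)-pseudoultrametric if \(d\) is symmetric, \(d(x,x)=p_0\) for all \(x\), and for every triple \(\langle x_1,x_2,x_3\rangle\) in \(X\) there is a permutation \((i_1,i_2,i_3)\) of \((1,2,3)\) with \(d(x_{i_1},x_{i_3})\preccurlyeq_P d(x_{i_1},x_{i_2})\) and \(d(x_{i_1},x_{i_2})=d(x_{i_2},x_{i_3})\); it is a \(P\)-ultrametric if moreover \(d(x,y)=p_0\) iff \(x=y\). A map \(f\colon Q\to L\) is isotone if \(q_1\preccurlyeq_Q q_2\) implies \(f(q_1)\preccurlyeq_L f(q_2)\). *)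

theory Defs
  imports Main "HOL-Library.Infinite_Typeclass"
begin

definition P_pseudoultrametric :: "'p::order \<Rightarrow> 'x set \<Rightarrow> ('x \<Rightarrow> 'x \<Rightarrow> 'p) \<Rightarrow> bool" where
  "P_pseudoultrametric p0 X d \<longleftrightarrow>
     (\<forall>x\<in>X. \<forall>y\<in>X. d x y = d y x) \<and>
     (\<forall>x\<in>X. d x x = p0) \<and>
     (\<forall>x1\<in>X. \<forall>x2\<in>X. \<forall>x3\<in>X.
        \<exists>(a, b, c) \<in> {(x1,x2,x3), (x1,x3,x2), (x2,x1,x3), (x2,x3,x1), (x3,x1,x2), (x3,x2,x1)}.
          d a c \<le> d a b \<and> d a b = d b c)"

definition P_ultrametric :: "'p::order \<Rightarrow> 'x set \<Rightarrow> ('x \<Rightarrow> 'x \<Rightarrow> 'p) \<Rightarrow> bool" where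
  "P_ultrametric p0 X d \<longleftrightarrow>
     P_pseudoultrametric p0 X d \<and> (\<forall>x\<in>X. \<forall>y\<in>X. d x y = p0 \<longleftrightarrow> x = y)"

end

theory Submission
  imports Defs
begin

text \<open>An isotone map preserves both clauses of the triangle axiom, so composing with it
  turns pseudoultrametrics into pseudoultrametrics, and separation survives exactly when
  \<open>q\<^sub>0\<close> is the only point sent to \<open>l\<^sub>0\<close>. Conversely, composing \<open>f\<close> with the one-point
  ultrametric gives \<open>f q\<^sub>0 = l\<^sub>0\<close>, and composing it with the ultrametric on three points
  with sides \<open>q\<^sub>1, q\<^sub>2, q\<^sub>2\<close> (where \<open>q\<^sub>0 \<prec> q\<^sub>1 \<preceq> q\<^sub>2\<close>) gives \<open>f q\<^sub>1 \<noteq> l\<^sub>0\<close> by separation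
  and \<open>f q\<^sub>1 \<preceq> f q\<^sub>2\<close> by the strong triangle inequality.\<close>

lemma P_pseudoultrametric_comp_mono:
  assumes "mono f" and "P_pseudoultrametric p0 X d"
  shows "P_pseudoultrametric (f p0) X (\<lambda>x y. f (d x y))"
  unfolding P_pseudoultrametric_def
proof (intro conjI ballI)
  fix x y assume "x \<in> X" "y \<in> X"
  then show "f (d x y) = f (d y x)"
    using assms(2) unfolding P_pseudoultrametric_def by simp
next
  fix x assume "x \<in> X"
  then show "f (d x x) = f p0"
    using assms(2) unfolding P_pseudoultrametric_def by simp
next
  fix x1 x2 x3 assume "x1 \<in> X" "x2 \<in> X" "x3 \<in> X"
  then obtain u v w where
    "(u, v, w) \<in> {(x1,x2,x3), (x1,x3,x2), (x2,x1,x3), (x2,x3,x1), (x3,x1,x2), (x3,x2,x1)}"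
    and "d u w \<le> d u v" "d u v = d v w"
    using assms(2) unfolding P_pseudoultrametric_def by blast
  moreover have "f (d u w) \<le> f (d u v)"
    using \<open>d u w \<le> d u v\<close> assms(1) by (rule monoD[rotated])
  ultimately show "\<exists>(u, v, w) \<in> {(x1,x2,x3), (x1,x3,x2), (x2,x1,x3), (x2,x3,x1), (x3,x1,x2), (x3,x2,x1)}.
      f (d u w) \<le> f (d u v) \<and> f (d u v) = f (d v w)"
    by (intro bexI[of _ "(u, v, w)"]) simp_all
qed

lemma P_ultrametric_comp_mono:
  assumes "mono f" and "\<forall>q. f q = l0 \<longleftrightarrow> q = q0" and "P_ultrametric q0 X d"
  shows "P_ultrametric l0 X (\<lambda>x y. f (d x y))"
proof -
  have f_q0: "f q0 = l0" using assms(2) by blast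
  have "P_pseudoultrametric q0 X d" using assms(3) unfolding P_ultrametric_def ..
  from P_pseudoultrametric_comp_mono[OF assms(1) this]
  have "P_pseudoultrametric l0 X (\<lambda>x y. f (d x y))" unfolding f_q0 .
  moreover have "\<forall>x\<in>X. \<forall>y\<in>X. f (d x y) = l0 \<longleftrightarrow> x = y"
    using assms(2,3) unfolding P_ultrametric_def by simp
  ultimately show ?thesis
    unfolding P_ultrametric_def ..
qed

lemma P_pseudoultrametric_strong_triangle:
  assumes "P_pseudoultrametric p0 X d" and "x \<in> X" "y \<in> X" "z \<in> X"
  shows "d x y \<le> d x z \<or> d x y \<le> d z y"
proof -
  have symmetric: "d u v = d v u" if "u \<in> X" "v \<in> X" for u v
    using assms(1) that unfolding P_pseudoultrametric_def by blast
  obtain u v w where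
    "(u, v, w) \<in> {(x,y,z), (x,z,y), (y,x,z), (y,z,x), (z,x,y), (z,y,x)}"
    and "d u w \<le> d u v" "d u v = d v w"
    using assms unfolding P_pseudoultrametric_def by blast
  then show ?thesis
    using symmetric assms(2-4) by auto
qed

lemma P_ultrametric_singleton: "P_ultrametric p0 {a} (\<lambda>x y. p0)"
  unfolding P_ultrametric_def P_pseudoultrametric_def by auto

definition three_point_ultrametric :: "'p \<Rightarrow> 'p \<Rightarrow> 'p \<Rightarrow> 'x \<Rightarrow> 'x \<Rightarrow> 'x \<Rightarrow> 'x \<Rightarrow> 'p" where
  "three_point_ultrametric p0 p1 p2 a b x y =
     (if x = y then p0 else if {x, y} = {a, b} then p1 else p2)"

lemma P_ultrametric_three_point:
  fixes p0 p1 p2 :: "'p::order"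
  assumes "a \<noteq> b" "a \<noteq> c" "b \<noteq> c" and "p0 < p1" "p1 \<le> p2"
  shows "P_ultrametric p0 {a, b, c} (three_point_ultrametric p0 p1 p2 a b)"
  using assms unfolding P_ultrametric_def P_pseudoultrametric_def three_point_ultrametric_def
  by (auto simp: doubleton_eq_iff)

lemma (in infinite) obtain_three_distinct:
  obtains a b c :: 'a where "a \<noteq> b" "a \<noteq> c" "b \<noteq> c"
  using infinite_arbitrarily_large[OF infinite_UNIV, of 3] card_3_iff by metis

lemma comp_three_point_ultrametric:
  fixes f :: "'p::order \<Rightarrow> 'l::order"
  assumes "a \<noteq> b" "a \<noteq> c" "b \<noteq> c"
    and "P_ultrametric l0 {a, b, c} (\<lambda>x y. f (three_point_ultrametric p0 p1 p2 a b x y))"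
  shows "f p1 \<noteq> l0" and "f p1 \<le> f p2"
proof -
  let ?e = "\<lambda>x y. f (three_point_ultrametric p0 p1 p2 a b x y)"
  have distances: "?e a b = f p1" "?e a c = f p2" "?e c b = f p2"
    using assms(1-3) by (auto simp: three_point_ultrametric_def doubleton_eq_iff)
  show "f p1 \<noteq> l0"
    using assms distances(1) unfolding P_ultrametric_def by simp
  have "P_pseudoultrametric l0 {a, b, c} ?e"
    using assms(4) unfolding P_ultrametric_def ..
  then have "?e a b \<le> ?e a c \<or> ?e a b \<le> ?e c b"
    by (rule P_pseudoultrametric_strong_triangle) simp_all
  then show "f p1 \<le> f p2"
    unfolding distances by auto
qed

theorem corollary3p25:
  fixes q0 :: "'q::order" and l0 :: "'l::order" and f :: "'q \<Rightarrow> 'l"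
  assumes "\<forall>q. q0 \<le> q" and "\<forall>l. l0 \<le> l"
  shows "(\<forall>X :: 'x::infinite set. X \<noteq> {} \<longrightarrow>
            (\<forall>d. P_ultrametric q0 X d \<longrightarrow> P_ultrametric l0 X (\<lambda>x y. f (d x y))))
         \<longleftrightarrow> (mono f \<and> (\<forall>q. f q = l0 \<longleftrightarrow> q = q0))"
proof
  assume preserves: "\<forall>X :: 'x::infinite set. X \<noteq> {} \<longrightarrow>
            (\<forall>d. P_ultrametric q0 X d \<longrightarrow> P_ultrametric l0 X (\<lambda>x y. f (d x y)))"
  obtain a b c :: 'x where abc: "a \<noteq> b" "a \<noteq> c" "b \<noteq> c" by (rule obtain_three_distinct)
  have above_q0: "q0 < q" if "q \<noteq> q0" for q
    using assms(1) that by (simp add: order_less_le)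
  have three_point: "f q1 \<noteq> l0 \<and> f q1 \<le> f q2" if "q1 \<noteq> q0" "q1 \<le> q2" for q1 q2
  proof -
    have "P_ultrametric l0 {a, b, c} (\<lambda>x y. f (three_point_ultrametric q0 q1 q2 a b x y))"
      using preserves[rule_format, OF _ P_ultrametric_three_point[OF abc above_q0[OF that(1)] that(2)]]
      by simp
    from comp_three_point_ultrametric[OF abc this] show ?thesis ..
  qed
  have "P_ultrametric l0 {a} (\<lambda>x y. f q0)"
    using preserves[rule_format, OF _ P_ultrametric_singleton[of q0 a]] by simp
  then have "f q0 = l0"
    unfolding P_ultrametric_def by blast
  moreover have "mono f"
  proof
    fix q1 q2 :: 'q
    assume "q1 \<le> q2"
    then show "f q1 \<le> f q2"
      using \<open>f q0 = l0\<close> assms(2) three_point by (cases "q1 = q0") auto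
  qed
  ultimately show "mono f \<and> (\<forall>q. f q = l0 \<longleftrightarrow> q = q0)"
    using three_point by auto
next
  assume "mono f \<and> (\<forall>q. f q = l0 \<longleftrightarrow> q = q0)"
  then show "\<forall>X :: 'x::infinite set. X \<noteq> {} \<longrightarrow>
            (\<forall>d. P_ultrametric q0 X d \<longrightarrow> P_ultrametric l0 X (\<lambda>x y. f (d x y)))"
    by (intro allI impI) (elim conjE P_ultrametric_comp_mono)
qed

end
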